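(* Let $N\ge 2$ and let $a_1,a_2,\dots,a_{2N+1}$ be a sequence in $\mathbb{Z}_N$ such that (i) $a_1=a_2=\cdots=a_N$; (ii) $a_i\ne a_1$ for all $i\ge N+1$; (iii) the terms $a_{N+1},\dots,a_{2N+1}$ are not all equal. Then there is a set of indices $I\subseteq\{1,\dots,2N+1\}$ with $|I|=N$ such that $\sum_{i\in I}a_i=0$, $I\cap\{1,\dots,N\}\neq\emptyset$, and $I\not\subseteq\{1,\dots,N\}$. *)

theory Defs
  imports "HOL-Number_Theory.Cong"
begin

end

theory Submission imports Defs begin

text \<open>
  Subtracting \<open>a\<^sub>1\<close> turns the last \<open>N + 1\<close> terms into nonzero residues, two of which
  (\<open>c\<^sub>p \<noteq> c\<^sub>q\<close>) differ; for \<open>N = 2\<close> this is already impossible. List \<open>N - 1\<close> of them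
  starting with \<open>c\<^sub>p, c\<^sub>q\<close>: the \<open>N\<close> prefix sums together with \<open>c\<^sub>q\<close> are \<open>N + 1\<close> residues,
  so two coincide, and the difference is a nonempty zero-sum set \<open>K\<close> of these terms
  (a block of consecutive terms, or a prefix with \<open>c\<^sub>q\<close> removed, which still contains
  \<open>c\<^sub>p\<close>). Since \<open>|K| < N\<close>, adding \<open>N - |K|\<close> indices from the first block gives \<open>N\<close>
  indices whose \<open>a\<close>-sum is \<open>N a\<^sub>1 \<equiv> 0\<close>.
\<close>

lemma zero_sum_subset_seq:
  fixes N :: nat and c :: "nat \<Rightarrow> int"
  assumes "N \<ge> 3"
    and nonzero: "\<forall>k<N - 1. \<not> [c k = 0] (mod int N)"
    and incong: "\<not> [c 0 = c 1] (mod int N)"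
  shows "\<exists>K\<subseteq>{..<N - 1}. K \<noteq> {} \<and> [(\<Sum>k\<in>K. c k) = 0] (mod int N)"
proof -
  define s where "s j = (\<Sum>k\<in>{0..<j}. c k)" for j
  define h where "h j = (if j < N then s j mod int N else c 1 mod int N)" for j
  have "h ` {0..N} \<subseteq> {0..<int N}"
    using \<open>N \<ge> 3\<close> by (auto simp: h_def)
  then have "card (h ` {0..N}) < card {0..N}"
    using card_mono[of "{0..<int N}" "h ` {0..N}"] by simp
  then obtain i j where ij: "i < j" "j \<le> N" "h i = h j"
    using pigeonhole unfolding inj_on_def
    by (metis atLeastAtMost_iff linorder_neqE_nat)
  show ?thesis
  proof (cases "j < N")
    case True
    then have "[s j - s i = 0] (mod int N)"
      using ij by (simp add: h_def cong_def mod_eq_dvd_iff dvd_diff_commute)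
    moreover have "s j - s i = (\<Sum>k\<in>{i..<j}. c k)"
      unfolding s_def using ij by (simp add: sum_diff_nat_ivl)
    ultimately show ?thesis
      using ij True by (intro exI[of _ "{i..<j}"]) auto
  next
    case False
    then have s_i: "[s i = c 1] (mod int N)"
      using ij by (simp add: h_def cong_def)
    have "i \<ge> 2"
    proof (rule ccontr)
      assume "\<not> i \<ge> 2"
      then consider "i = 0" | "i = 1" by linarith
      then show False
        using s_i nonzero incong \<open>N \<ge> 3\<close> by cases (auto simp: s_def cong_sym_eq)
    qed
    have "s i = c 1 + (\<Sum>k\<in>{0..<i} - {1}. c k)"
      unfolding s_def using \<open>i \<ge> 2\<close> by (subst sum.remove[of _ 1]) auto
    then have "[(\<Sum>k\<in>{0..<i} - {1}. c k) = 0] (mod int N)"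
      using s_i by (simp add: cong_def mod_eq_dvd_iff)
    moreover have "0 \<in> {0..<i} - {1}" "{0..<i} - {1} \<subseteq> {..<N - 1}"
      using \<open>i \<ge> 2\<close> ij False by auto
    ultimately show ?thesis by blast
  qed
qed

lemma zero_sum_subset:
  fixes N :: nat and c :: "'a \<Rightarrow> int"
  assumes "N \<ge> 3" and "finite S" and "N - 1 \<le> card S"
    and "p \<in> S" and "q \<in> S"
    and nonzero: "\<forall>x\<in>S. \<not> [c x = 0] (mod int N)"
    and incong: "\<not> [c p = c q] (mod int N)"
  shows "\<exists>K\<subseteq>S. K \<noteq> {} \<and> card K < N \<and> [(\<Sum>x\<in>K. c x) = 0] (mod int N)"
proof -
  obtain xs where xs: "set xs = S - {p, q}" "distinct xs"
    using finite_distinct_list \<open>finite S\<close> by (meson finite_Diff)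
  define ys where "ys = p # q # xs"
  have "p \<noteq> q" using incong by auto
  then have ys: "distinct ys" "set ys = S"
    using xs \<open>p \<in> S\<close> \<open>q \<in> S\<close> by (auto simp: ys_def)
  then have "length ys = card S" by (metis distinct_card)
  then have "ys ! k \<in> S" if "k < N - 1" for k
    using ys(2) that \<open>N - 1 \<le> card S\<close> by auto
  then obtain K where K: "K \<subseteq> {..<N - 1}" "K \<noteq> {}"
      "[(\<Sum>k\<in>K. c (ys ! k)) = 0] (mod int N)"
    using zero_sum_subset_seq[of N "\<lambda>k. c (ys ! k)"] \<open>N \<ge> 3\<close> nonzero incong
    by (auto simp: ys_def)
  have inj: "inj_on (nth ys) K"
    using K(1) \<open>length ys = card S\<close> \<open>N - 1 \<le> card S\<close> ys(1)
    by (intro inj_on_nth) auto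
  have "card (nth ys ` K) < N"
    using card_mono[OF _ K(1)] \<open>N \<ge> 3\<close> by (simp add: card_image[OF inj])
  moreover have "nth ys ` K \<subseteq> S"
    using K(1) \<open>\<And>k. k < N - 1 \<Longrightarrow> ys ! k \<in> S\<close> by auto
  ultimately show ?thesis
    using K by (intro exI[of _ "nth ys ` K"]) (simp add: sum.reindex[OF inj])
qed

lemma cong_mod_2_of_both_incong:
  fixes x y z :: int
  assumes "\<not> [y = x] (mod 2)" and "\<not> [z = x] (mod 2)"
  shows "[y = z] (mod 2)"
  using assms unfolding cong_def by presburger

lemma zero_sum_padding:
  fixes N :: nat and a :: "nat \<Rightarrow> int"
  assumes first_block: "\<forall>i\<in>{1..N}. [a i = a 1] (mod int N)"
    and "finite K" and "K \<inter> {1..N} = {}" and "card K \<le> N"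
    and K_sum: "[(\<Sum>i\<in>K. a i - a 1) = 0] (mod int N)"
  shows "card (K \<union> {1..N - card K}) = N"
    and "[(\<Sum>i\<in>K \<union> {1..N - card K}. a i) = 0] (mod int N)"
proof -
  have "{1..N - card K} \<subseteq> {1..N}" by auto
  with \<open>K \<inter> {1..N} = {}\<close> have disjoint: "K \<inter> {1..N - card K} = {}" by blast
  then show "card (K \<union> {1..N - card K}) = N"
    using \<open>finite K\<close> \<open>card K \<le> N\<close> by (simp add: card_Un_disjoint)
  have "[(\<Sum>i\<in>{1..N - card K}. a i) = (\<Sum>i\<in>{1..N - card K}. a 1)] (mod int N)"
    using first_block by (intro cong_sum) auto
  then have padding_sum: "[(\<Sum>i\<in>{1..N - card K}. a i) = int (N - card K) * a 1] (mod int N)"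
    by simp
  have "(\<Sum>i\<in>K \<union> {1..N - card K}. a i)
      = (\<Sum>i\<in>K. a i - a 1) + int (card K) * a 1 + (\<Sum>i\<in>{1..N - card K}. a i)"
    using \<open>finite K\<close> disjoint by (simp add: sum.union_disjoint sum_subtractf)
  also have "[\<dots> = 0 + int (card K) * a 1 + int (N - card K) * a 1] (mod int N)"
    using K_sum padding_sum by (intro cong_add cong_refl)
  also have "0 + int (card K) * a 1 + int (N - card K) * a 1 = int N * a 1"
    using \<open>card K \<le> N\<close> by (simp add: of_nat_diff algebra_simps)
  also have "[\<dots> = 0] (mod int N)"
    by (rule cong_mult_self_left)
  finally show "[(\<Sum>i\<in>K \<union> {1..N - card K}. a i) = 0] (mod int N)" .
qed

theorem lemma3p1:
  fixes N :: nat and a :: "nat \<Rightarrow> int"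
  assumes "N \<ge> 2"
    and "\<forall>i\<in>{1..N}. [a i = a 1] (mod int N)"
    and "\<forall>i\<in>{N+1..2*N+1}. \<not> [a i = a 1] (mod int N)"
    and "\<exists>i\<in>{N+1..2*N+1}. \<exists>j\<in>{N+1..2*N+1}. \<not> [a i = a j] (mod int N)"
  shows "\<exists>I. I \<subseteq> {1..2*N+1} \<and> card I = N \<and> [(\<Sum>i\<in>I. a i) = 0] (mod int N)
           \<and> I \<inter> {1..N} \<noteq> {} \<and> \<not> I \<subseteq> {1..N}"
proof -
  obtain p q where pq: "p \<in> {N+1..2*N+1}" "q \<in> {N+1..2*N+1}" "\<not> [a p = a q] (mod int N)"
    using assms(4) by blast
  have "\<not> [a p = a 1] (mod int N)" and "\<not> [a q = a 1] (mod int N)"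
    using assms(3) pq(1,2) by blast+
  then have "N \<noteq> 2"
    using pq(3) cong_mod_2_of_both_incong[of "a p" "a 1" "a q"] by force
  with assms(1) have "N \<ge> 3" by simp
  have nonzero: "\<forall>i\<in>{N+1..2*N+1}. \<not> [a i - a 1 = 0] (mod int N)"
    and incong: "\<not> [a p - a 1 = a q - a 1] (mod int N)"
    using assms(3) pq(3) by (simp_all add: cong_diff_iff_cong_0 cong_iff_dvd_diff)
  have "N - 1 \<le> card {N+1..2*N+1}" by simp
  from zero_sum_subset[OF \<open>N \<ge> 3\<close> finite_atLeastAtMost this pq(1,2) nonzero incong]
  obtain K where K: "K \<subseteq> {N+1..2*N+1}" "K \<noteq> {}" "card K < N"
      "[(\<Sum>i\<in>K. a i - a 1) = 0] (mod int N)"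
    by blast
  have K_beyond: "x > N" if "x \<in> K" for x
    using K(1) that by auto
  then have "K \<inter> {1..N} = {}" and "finite K"
    using K(1) finite_subset by fastforce+
  note zero_sum_padding[OF assms(2) \<open>finite K\<close> this(1) less_imp_le[OF K(3)] K(4)]
  moreover have "1 \<in> (K \<union> {1..N - card K}) \<inter> {1..N}"
    and "K \<union> {1..N - card K} \<subseteq> {1..2*N+1}"
    using K(1,3) by auto
  moreover have "\<not> K \<union> {1..N - card K} \<subseteq> {1..N}"
    using K(2) K_beyond by fastforce
  ultimately show ?thesis by blast
qed

end
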